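(* Let $P$ be a finite poset and $R$ a commutative unital ring. Then $Z^3_3(P,R)=J^3_2(P,R)$. In particular, $Z^3_3(P,R)$ is an ideal of $I^3(P,R)$.
   Context: For a finite poset $P$, $P^3_\le=\{(x,y,z)\in P^3: x\le y\le z\}$, and $I^3(P,R)$ is the $R$-module of functions $f:P^3_\le\to R$ with multiplication $(fg)(x_1,x_2,x_3)=\sum f(x_1,y_1,y_2)g(y_1,y_2,x_3)$ over all $x_1\le y_1\le x_2\le y_2\le x_3$. For $a\le b$, $l(a,b)$ is the maximum of $|C|-1$ over chains $C$ in the interval $[a,b]$. $J^3_k(P,R)=\{f: f(x_1,x_2,x_3)=0 \text{ whenever } l(x_1,x_3)<k\}$. $[f,g]=fg-gf$; for subsets $U,V$, $[U,V]$ is the $R$-submodule spanned by all $[u,v]$, $u\in U,v\in V$. $Z^3_1(P,R)=J^3_1(P,R)$, $Z^3_2(P,R)=[Z^3_1(P,R),Z^3_1(P,R)]$, $Z^3_3(P,R)=[Z^3_2(P,R),Z^3_2(P,R)]$. *)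

theory Defs
  imports Main
begin

text \<open>An element of I^3(P,R),
  a function on P^3_le = {(x,y,z). x \<le> y \<le> z}, is represented by a function of three
  arguments that vanishes off P^3_le (canonical extension by zero).\<close>

type_synonym ('a, 'r) fun3 = "'a \<Rightarrow> 'a \<Rightarrow> 'a \<Rightarrow> 'r"

definition I3 :: "('a::order, 'r::comm_ring_1) fun3 set" where
  "I3 = {f. \<forall>x y z. \<not> (x \<le> y \<and> y \<le> z) \<longrightarrow> f x y z = 0}"

definition mult3 :: "('a::{order,finite}, 'r::comm_ring_1) fun3 \<Rightarrow> ('a, 'r) fun3 \<Rightarrow> ('a, 'r) fun3" where
  "mult3 f g = (\<lambda>x1 x2 x3. if x1 \<le> x2 \<and> x2 \<le> x3 then
      (\<Sum>(y1, y2) \<in> {(y1, y2). x1 \<le> y1 \<and> y1 \<le> x2 \<and> x2 \<le> y2 \<and> y2 \<le> x3}.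
          f x1 y1 y2 * g y1 y2 x3)
    else 0)"

definition len :: "'a::{order,finite} \<Rightarrow> 'a \<Rightarrow> nat" where
  "len a b = Max {card C - 1 | C. C \<subseteq> {a..b} \<and> Complete_Partial_Order.chain (\<le>) C}"

definition J3 :: "nat \<Rightarrow> ('a::{order,finite}, 'r::comm_ring_1) fun3 set" where
  "J3 k = {f \<in> I3. \<forall>x1 x2 x3. len x1 x3 < k \<longrightarrow> f x1 x2 x3 = 0}"

definition commutator3 :: "('a::{order,finite}, 'r::comm_ring_1) fun3 \<Rightarrow> ('a, 'r) fun3 \<Rightarrow> ('a, 'r) fun3" where
  "commutator3 f g = (\<lambda>x y z. mult3 f g x y z - mult3 g f x y z)"

inductive_set rspan :: "('a, 'r::comm_ring_1) fun3 set \<Rightarrow> ('a, 'r) fun3 set" for S where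
  zero: "(\<lambda>x y z. 0) \<in> rspan S"
| base: "f \<in> S \<Longrightarrow> f \<in> rspan S"
| add: "f \<in> rspan S \<Longrightarrow> g \<in> rspan S \<Longrightarrow> (\<lambda>x y z. f x y z + g x y z) \<in> rspan S"
| smult: "f \<in> rspan S \<Longrightarrow> (\<lambda>x y z. r * f x y z) \<in> rspan S"

definition bracket3 :: "('a::{order,finite}, 'r::comm_ring_1) fun3 set \<Rightarrow> ('a, 'r) fun3 set \<Rightarrow> ('a, 'r) fun3 set" where
  "bracket3 U V = rspan {commutator3 u v | u v. u \<in> U \<and> v \<in> V}"

definition Z3_1 :: "('a::{order,finite}, 'r::comm_ring_1) fun3 set" where
  "Z3_1 = J3 1"

definition Z3_2 :: "('a::{order,finite}, 'r::comm_ring_1) fun3 set" where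
  "Z3_2 = bracket3 Z3_1 Z3_1"

definition Z3_3 :: "('a::{order,finite}, 'r::comm_ring_1) fun3 set" where
  "Z3_3 = bracket3 Z3_2 Z3_2"

definition ideal3 :: "('a::{order,finite}, 'r::comm_ring_1) fun3 set \<Rightarrow> bool" where
  "ideal3 S \<longleftrightarrow> S \<subseteq> I3 \<and> (\<lambda>x y z. 0) \<in> S
     \<and> (\<forall>f\<in>S. \<forall>g\<in>S. (\<lambda>x y z. f x y z + g x y z) \<in> S)
     \<and> (\<forall>f\<in>S. \<forall>r. (\<lambda>x y z. r * f x y z) \<in> S)
     \<and> (\<forall>f\<in>S. \<forall>g\<in>I3. mult3 f g \<in> S \<and> mult3 g f \<in> S)"

end

theory Submission
  imports Defs
begin

text \<open>
  Commutators vanish on the diagonal because \<open>R\<close> is commutative, so every element of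
  \<open>Z\<^sup>3\<^sub>2\<close> does. If \<open>a\<close> is covered by \<open>b\<close>, a product evaluated at \<open>(a,a,b)\<close> or \<open>(a,b,b)\<close>
  only involves the values of its factors at \<open>(a,a,a), (a,a,b), (a,b,b), (b,b,b)\<close>. Hence
  elements of \<open>Z\<^sup>3\<^sub>2\<close> take the same value at \<open>(a,a,b)\<close> and \<open>(a,b,b)\<close>, and commutators of such
  elements vanish there. A function of \<open>I\<^sup>3\<close> vanishing on all these triples is supported on
  triples \<open>(x,y,z)\<close> with an element strictly between \<open>x\<close> and \<open>z\<close>, i.e. it lies in \<open>J\<^sup>3\<^sub>2\<close>.

  Conversely, \<open>J\<^sup>3\<^sub>2\<close> is spanned by the units \<open>e\<^sub>a\<^sub>b\<^sub>c = unit3 a b c\<close> with \<open>a < m < c\<close> for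
  some \<open>m\<close>. The indicators \<open>T\<^sub>a\<^sub>c = interval3 a c\<close> of the triples \<open>(a,y,c)\<close> satisfy
  \<open>T\<^sub>a\<^sub>c = [e\<^sub>a\<^sub>a\<^sub>c, e\<^sub>a\<^sub>c\<^sub>c]\<close> (for \<open>a < c\<close>); these and \<open>e\<^sub>a\<^sub>b\<^sub>c = [e\<^sub>a\<^sub>b\<^sub>b, e\<^sub>b\<^sub>b\<^sub>c]\<close>
  (for \<open>a < b < c\<close>) lie in \<open>Z\<^sup>3\<^sub>2\<close>, so \<open>e\<^sub>a\<^sub>b\<^sub>c = [T\<^sub>a\<^sub>b, T\<^sub>b\<^sub>c]\<close> lies in \<open>Z\<^sup>3\<^sub>3\<close>; choosing
  \<open>d\<close> covering \<open>a\<close> with \<open>d < c\<close> gives \<open>e\<^sub>a\<^sub>a\<^sub>c = [T\<^sub>a\<^sub>d, e\<^sub>a\<^sub>d\<^sub>c] - e\<^sub>a\<^sub>d\<^sub>c\<close>, and \<open>e\<^sub>a\<^sub>c\<^sub>c\<close> is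
  handled symmetrically. Finally every \<open>J\<^sup>3\<^sub>k\<close> is an ideal, because \<open>l\<close> is monotone under
  inclusion of intervals.
\<close>

lemma finite_len_set:
  "finite {card C - 1 | C. C \<subseteq> {a..b::'a::{order,finite}} \<and> Complete_Partial_Order.chain (\<le>) C}"
  by (rule finite_image_set) simp

lemma len_ge:
  fixes a b :: "'a::{order,finite}"
  assumes "C \<subseteq> {a..b}" "Complete_Partial_Order.chain (\<le>) C"
  shows "card C - 1 \<le> len a b"
  unfolding len_def using assms by (intro Max_ge[OF finite_len_set]) blast

lemma len_attained:
  fixes a b :: "'a::{order,finite}"
  obtains C where "C \<subseteq> {a..b}" "Complete_Partial_Order.chain (\<le>) C" "len a b = card C - 1"
proof -
  have "{card C - 1 | C. C \<subseteq> {a..b} \<and> Complete_Partial_Order.chain (\<le>) C} \<noteq> {}"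
    using chain_empty by blast
  from Max_in[OF finite_len_set this]
  have "\<exists>C. C \<subseteq> {a..b} \<and> Complete_Partial_Order.chain (\<le>) C \<and> len a b = card C - 1"
    unfolding len_def by auto
  with that show ?thesis by metis
qed

lemma len_mono:
  fixes a b c d :: "'a::{order,finite}"
  assumes "c \<le> a" "b \<le> d"
  shows "len a b \<le> len c d"
proof -
  obtain C where C: "C \<subseteq> {a..b}" "Complete_Partial_Order.chain (\<le>) C"
    and len_ab: "len a b = card C - 1"
    by (rule len_attained)
  have "C \<subseteq> {c..d}"
    using C(1) assms by (meson atLeastatMost_subset_iff order.trans)
  from len_ge[OF this C(2)] len_ab show ?thesis by simp
qed

lemma len_refl: "len (a::'a::{order,finite}) a = 0"
proof -
  obtain C where "C \<subseteq> {a..a}" "len a a = card C - 1" by (rule len_attained)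
  moreover from \<open>C \<subseteq> {a..a}\<close> have "card C \<le> 1"
    using card_mono[of "{a}" C] by simp
  ultimately show ?thesis by simp
qed

lemma one_le_len:
  fixes a b :: "'a::{order,finite}"
  assumes "a < b"
  shows "1 \<le> len a b"
proof -
  have "card {a, b} - 1 \<le> len a b"
    using assms by (intro len_ge) (auto simp: chain_def)
  with assms show ?thesis by simp
qed

lemma two_le_len_iff:
  fixes a b :: "'a::{order,finite}"
  shows "2 \<le> len a b \<longleftrightarrow> (\<exists>c. a < c \<and> c < b)"
proof
  assume "2 \<le> len a b"
  then obtain C where C: "C \<subseteq> {a..b}" "2 \<le> card C - 1"
    by (metis len_attained)
  have "\<not> C \<subseteq> {a, b}"
  proof
    assume "C \<subseteq> {a, b}"
    then have "card C \<le> card {a, b}" by (intro card_mono) auto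
    also have "\<dots> \<le> 2" by (simp add: card_insert_le_m1)
    finally show False using C by simp
  qed
  then obtain c where "c \<in> C" "c \<noteq> a" "c \<noteq> b" by blast
  moreover from C(1) \<open>c \<in> C\<close> have "a \<le> c" "c \<le> b" by auto
  ultimately show "\<exists>c. a < c \<and> c < b" by (auto simp: order.strict_iff_order)
next
  assume "\<exists>c. a < c \<and> c < b"
  then obtain c where c: "a < c" "c < b" by blast
  have "card {a, c, b} - 1 \<le> len a b"
    using c by (intro len_ge) (auto simp: chain_def)
  moreover have "card {a, c, b} = 3" using c by (auto simp: card_insert_if)
  ultimately show "2 \<le> len a b" by simp
qed

lemma J3_2_eq:
  "(J3 2 :: ('a::{order,finite}, 'r::comm_ring_1) fun3 set) =
     {f \<in> I3. \<forall>x1 x2 x3. f x1 x2 x3 \<noteq> 0 \<longrightarrow> (\<exists>c. x1 < c \<and> c < x3)}"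
  unfolding J3_def not_le[symmetric] two_le_len_iff by blast

lemma mult3_in_I3: "mult3 f g \<in> I3"
  unfolding I3_def mult3_def by auto

lemma mult3_nonzero:
  fixes f g :: "('a::{order,finite}, 'r::comm_ring_1) fun3"
  assumes "mult3 f g x1 x2 x3 \<noteq> 0"
  obtains y1 y2 where "x1 \<le> y1" "y1 \<le> x2" "x2 \<le> y2" "y2 \<le> x3"
    "f x1 y1 y2 \<noteq> 0" "g y1 y2 x3 \<noteq> 0"
proof -
  have "\<exists>y1 y2. x1 \<le> y1 \<and> y1 \<le> x2 \<and> x2 \<le> y2 \<and> y2 \<le> x3 \<and> f x1 y1 y2 \<noteq> 0 \<and> g y1 y2 x3 \<noteq> 0"
  proof (rule ccontr)
    assume "\<not> ?thesis"
    then have "mult3 f g x1 x2 x3 = 0"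
      unfolding mult3_def by (fastforce intro!: sum.neutral)
    with assms show False by simp
  qed
  with that show thesis by blast
qed

lemma mult3_single_term:
  fixes f g :: "('a::{order,finite}, 'r::comm_ring_1) fun3"
  assumes "\<And>y1 y2. f x1 y1 y2 * g y1 y2 x3 \<noteq> 0 \<Longrightarrow> y1 = p \<and> y2 = q"
  shows "mult3 f g x1 x2 x3 =
    (if x1 \<le> p \<and> p \<le> x2 \<and> x2 \<le> q \<and> q \<le> x3 then f x1 p q * g p q x3 else 0)"
proof (cases "x1 \<le> x2 \<and> x2 \<le> x3")
  case True
  let ?S = "{(y1, y2). x1 \<le> y1 \<and> y1 \<le> x2 \<and> x2 \<le> y2 \<and> y2 \<le> x3}"
  have "(\<Sum>(y1, y2) \<in> ?S. f x1 y1 y2 * g y1 y2 x3)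
      = (\<Sum>y \<in> ?S. if y = (p, q) then f x1 p q * g p q x3 else 0)"
    by (rule sum.cong) (auto dest: assms)
  also have "\<dots> = (if (p, q) \<in> ?S then f x1 p q * g p q x3 else 0)"
    by (rule sum.delta) simp
  finally show ?thesis unfolding mult3_def using True by simp
next
  case False
  then show ?thesis unfolding mult3_def by (auto dest: order_trans)
qed

lemma ideal3_J3: "ideal3 (J3 k :: ('a::{order,finite}, 'r::comm_ring_1) fun3 set)"
  unfolding ideal3_def
proof (intro conjI ballI allI)
  show "J3 k \<subseteq> I3" "(\<lambda>x y z. 0) \<in> J3 k" by (auto simp: J3_def I3_def)
next
  fix f g :: "('a, 'r) fun3"
  assume "f \<in> J3 k" "g \<in> J3 k"
  then show "(\<lambda>x y z. f x y z + g x y z) \<in> J3 k" by (auto simp: J3_def I3_def)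
next
  fix f :: "('a, 'r) fun3" and r :: 'r
  assume "f \<in> J3 k"
  then show "(\<lambda>x y z. r * f x y z) \<in> J3 k" by (auto simp: J3_def I3_def)
next
  fix f g :: "('a, 'r) fun3"
  assume f: "f \<in> J3 k"
  have "mult3 f g x1 x2 x3 = 0" "mult3 g f x1 x2 x3 = 0" if short: "len x1 x3 < k" for x1 x2 x3
  proof -
    show "mult3 f g x1 x2 x3 = 0"
    proof (rule ccontr)
      assume "mult3 f g x1 x2 x3 \<noteq> 0"
      then obtain y1 y2 where "y2 \<le> x3" "f x1 y1 y2 \<noteq> 0" by (rule mult3_nonzero)
      moreover have "len x1 y2 < k" using len_mono[of x1 x1 y2 x3] \<open>y2 \<le> x3\<close> short by simp
      ultimately show False using f by (simp add: J3_def)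
    qed
    show "mult3 g f x1 x2 x3 = 0"
    proof (rule ccontr)
      assume "mult3 g f x1 x2 x3 \<noteq> 0"
      then obtain y1 y2 where "x1 \<le> y1" "f y1 y2 x3 \<noteq> 0" by (rule mult3_nonzero)
      moreover have "len y1 x3 < k" using len_mono[of x1 y1 x3 x3] \<open>x1 \<le> y1\<close> short by simp
      ultimately show False using f by (simp add: J3_def)
    qed
  qed
  then show "mult3 f g \<in> J3 k" "mult3 g f \<in> J3 k"
    by (simp_all add: J3_def mult3_in_I3)
qed

definition covered_by :: "'a::order \<Rightarrow> 'a \<Rightarrow> bool" where
  "covered_by a b \<longleftrightarrow> a < b \<and> (\<forall>c. \<not> (a < c \<and> c < b))"

lemma covered_by_between_iff:
  assumes "covered_by a b"
  shows "a \<le> y \<and> y \<le> b \<longleftrightarrow> y = a \<or> y = b"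
proof
  assume "a \<le> y \<and> y \<le> b"
  with assms show "y = a \<or> y = b"
    unfolding covered_by_def by (metis order.not_eq_order_implies_strict)
next
  assume "y = a \<or> y = b"
  with assms show "a \<le> y \<and> y \<le> b" by (auto simp: covered_by_def)
qed

lemma exists_covered_by_above:
  fixes a b :: "'a::{order,finite}"
  assumes "a < b"
  obtains m where "covered_by a m" "m \<le> b"
proof -
  obtain m where m: "m \<in> {x. a < x \<and> x \<le> b}" "\<forall>y \<in> {x. a < x \<and> x \<le> b}. y \<le> m \<longrightarrow> m = y"
    using finite_has_minimal[of "{x. a < x \<and> x \<le> b}"] assms by auto
  then have "covered_by a m"
    unfolding covered_by_def by (auto dest: order.strict_trans order.strict_implies_order)
  with m that show thesis by blast
qed

lemma exists_covered_by_below: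
  fixes a b :: "'a::{order,finite}"
  assumes "a < b"
  obtains m where "a \<le> m" "covered_by m b"
proof -
  obtain m where m: "m \<in> {x. a \<le> x \<and> x < b}" "\<forall>y \<in> {x. a \<le> x \<and> x < b}. m \<le> y \<longrightarrow> m = y"
    using finite_has_maximal[of "{x. a \<le> x \<and> x < b}"] assms by auto
  then have "covered_by m b"
    unfolding covered_by_def by (auto dest: order.strict_implies_order intro: order.trans)
  with m that show thesis by blast
qed

lemma mult3_diag:
  fixes f g :: "('a::{order,finite}, 'r::comm_ring_1) fun3"
  shows "mult3 f g x x x = f x x x * g x x x"
proof -
  have "{(y1, y2). x \<le> y1 \<and> y1 \<le> x \<and> x \<le> y2 \<and> y2 \<le> x} = {(x, x)}"
    by (auto intro: order.antisym)
  then show ?thesis unfolding mult3_def by simp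
qed

lemma mult3_covered_left:
  fixes f g :: "('a::{order,finite}, 'r::comm_ring_1) fun3"
  assumes "covered_by a b"
  shows "mult3 f g a a b = f a a a * g a a b + f a a b * g a b b"
proof -
  have "{(y1, y2). a \<le> y1 \<and> y1 \<le> a \<and> a \<le> y2 \<and> y2 \<le> b} = {(a, a), (a, b)}"
    using assms unfolding covered_by_def by (auto intro: order.antisym simp: order.order_iff_strict)
  moreover have "a \<noteq> b" using assms by (auto simp: covered_by_def)
  ultimately show ?thesis using assms
    unfolding mult3_def covered_by_def by (simp add: order.strict_implies_order)
qed

lemma mult3_covered_right:
  fixes f g :: "('a::{order,finite}, 'r::comm_ring_1) fun3"
  assumes "covered_by a b"
  shows "mult3 f g a b b = f a a b * g a b b + f a b b * g b b b"
proof -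
  have "{(y1, y2). a \<le> y1 \<and> y1 \<le> b \<and> b \<le> y2 \<and> y2 \<le> b} = {(a, b), (b, b)}"
    using assms unfolding covered_by_def by (auto intro: order.antisym simp: order.order_iff_strict)
  moreover have "a \<noteq> b" using assms by (auto simp: covered_by_def)
  ultimately show ?thesis using assms
    unfolding mult3_def covered_by_def by (simp add: order.strict_implies_order)
qed

lemma commutator3_diag:
  fixes f g :: "('a::{order,finite}, 'r::comm_ring_1) fun3"
  shows "commutator3 f g x x x = 0"
  by (simp add: commutator3_def mult3_diag)

lemma commutator3_covered:
  fixes f g :: "('a::{order,finite}, 'r::comm_ring_1) fun3"
  assumes "covered_by a b"
    and "f a a a = 0" "f b b b = 0" "g a a a = 0" "g b b b = 0"
  shows "commutator3 f g a a b = f a a b * g a b b - g a a b * f a b b"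
    and "commutator3 f g a b b = f a a b * g a b b - g a a b * f a b b"
  using assms by (simp_all add: commutator3_def mult3_covered_left mult3_covered_right)

lemma rspan_eval_zero:
  assumes "h \<in> rspan S" "\<And>f. f \<in> S \<Longrightarrow> f x y z = 0"
  shows "h x y z = 0"
  using assms by (induction h rule: rspan.induct) auto

lemma rspan_eval_eq:
  assumes "h \<in> rspan S" "\<And>f. f \<in> S \<Longrightarrow> f x y z = f x' y' z'"
  shows "h x y z = h x' y' z'"
  using assms by (induction h rule: rspan.induct) auto

lemma rspan_sum:
  assumes "finite U" "\<And>t. t \<in> U \<Longrightarrow> g t \<in> rspan S"
  shows "(\<lambda>x y z. \<Sum>t\<in>U. g t x y z) \<in> rspan S"
  using assms
proof (induction U rule: finite_induct)
  case empty
  then show ?case using rspan.zero by simp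
next
  case (insert t U)
  then have "(\<lambda>x y z. g t x y z + (\<Sum>t\<in>U. g t x y z)) \<in> rspan S"
    using rspan.add[of "g t"] by simp
  with insert.hyps show ?case by simp
qed

lemma bracket3_subset_I3: "bracket3 U V \<subseteq> I3"
proof
  fix h assume h: "h \<in> bracket3 U V"
  have "h x y z = 0" if "\<not> (x \<le> y \<and> y \<le> z)" for x y z
    using h unfolding bracket3_def
    by (rule rspan_eval_zero) (use that in \<open>auto simp: commutator3_def mult3_def\<close>)
  then show "h \<in> I3" by (simp add: I3_def)
qed

lemma J3_1_diag: "f \<in> J3 1 \<Longrightarrow> f x x x = 0"
  by (simp add: J3_def len_refl)

lemma Z3_2_diag: "h \<in> Z3_2 \<Longrightarrow> h x x x = 0"
  unfolding Z3_2_def bracket3_def by (rule rspan_eval_zero) (auto simp: commutator3_diag)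

lemma Z3_2_covered:
  assumes "h \<in> Z3_2" "covered_by a b"
  shows "h a a b = h a b b"
  using assms(1) unfolding Z3_2_def bracket3_def
  by (rule rspan_eval_eq)
    (auto simp: Z3_1_def commutator3_covered[OF assms(2)] J3_1_diag)

lemma Z3_3_diag: "h \<in> Z3_3 \<Longrightarrow> h x x x = 0"
  unfolding Z3_3_def bracket3_def by (rule rspan_eval_zero) (auto simp: commutator3_diag)

lemma Z3_3_covered:
  assumes "h \<in> Z3_3" "covered_by a b"
  shows "h a a b = 0" and "h a b b = 0"
proof -
  have "commutator3 u v a a b = 0 \<and> commutator3 u v a b b = 0" if "u \<in> Z3_2" "v \<in> Z3_2" for u v
    using that Z3_2_covered[OF that(1) assms(2)] Z3_2_covered[OF that(2) assms(2)]
    by (simp add: commutator3_covered[OF assms(2)] Z3_2_diag mult.commute)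
  with assms(1) show "h a a b = 0" "h a b b = 0"
    unfolding Z3_3_def bracket3_def by (auto elim!: rspan_eval_zero)
qed

lemma Z3_3_subset_J3_2: "(Z3_3 :: ('a::{order,finite}, 'r::comm_ring_1) fun3 set) \<subseteq> J3 2"
proof
  fix h :: "('a, 'r) fun3" assume h: "h \<in> Z3_3"
  then have "h \<in> I3" using bracket3_subset_I3 unfolding Z3_3_def by blast
  moreover have "\<exists>c. x1 < c \<and> c < x3" if nonzero: "h x1 x2 x3 \<noteq> 0" for x1 x2 x3
  proof (rule ccontr)
    assume no_between: "\<nexists>c. x1 < c \<and> c < x3"
    from \<open>h \<in> I3\<close> nonzero have le: "x1 \<le> x2" "x2 \<le> x3" by (auto simp: I3_def)
    show False
    proof (cases "x1 = x3")
      case True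
      with le nonzero Z3_3_diag[OF h] show False by (metis order.antisym)
    next
      case False
      with le no_between have "covered_by x1 x3" "x2 = x1 \<or> x2 = x3"
        by (auto simp: covered_by_def order.order_iff_strict)
      with nonzero Z3_3_covered[OF h] show False by auto
    qed
  qed
  ultimately show "h \<in> J3 2" unfolding J3_2_eq by blast
qed

definition unit3 :: "'a \<Rightarrow> 'a \<Rightarrow> 'a \<Rightarrow> ('a, 'r::comm_ring_1) fun3" where
  "unit3 a b c = (\<lambda>x y z. if x = a \<and> y = b \<and> z = c then 1 else 0)"

definition interval3 :: "'a::order \<Rightarrow> 'a \<Rightarrow> ('a, 'r::comm_ring_1) fun3" where
  "interval3 a c = (\<lambda>x y z. if x = a \<and> z = c \<and> a \<le> y \<and> y \<le> c then 1 else 0)"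

lemma mult3_unit3_left:
  fixes g :: "('a::{order,finite}, 'r::comm_ring_1) fun3"
  shows "mult3 (unit3 a b c) g x1 x2 x3 =
    (if x1 = a \<and> a \<le> b \<and> b \<le> x2 \<and> x2 \<le> c \<and> c \<le> x3 then g b c x3 else 0)"
  by (subst mult3_single_term[where p = b and q = c]) (auto simp: unit3_def split: if_splits)

lemma mult3_unit3_right:
  fixes f :: "('a::{order,finite}, 'r::comm_ring_1) fun3"
  shows "mult3 f (unit3 a b c) x1 x2 x3 =
    (if x3 = c \<and> x1 \<le> a \<and> a \<le> x2 \<and> x2 \<le> b \<and> b \<le> c then f x1 a b else 0)"
  by (subst mult3_single_term[where p = a and q = b]) (auto simp: unit3_def split: if_splits)

lemma mult3_interval3_interval3:
  fixes a b c d :: "'a::{order,finite}"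
  shows "mult3 (interval3 a b) (interval3 c d :: ('a, 'r::comm_ring_1) fun3) x1 x2 x3 =
    (if x1 = a \<and> x3 = d \<and> a \<le> c \<and> c \<le> x2 \<and> x2 \<le> b \<and> b \<le> d then 1 else 0)"
  by (subst mult3_single_term[where p = c and q = b]) (auto simp: interval3_def split: if_splits)

lemma commutator3_unit3_unit3_interval3:
  fixes a c :: "'a::{order,finite}"
  assumes "a < c"
  shows "commutator3 (unit3 a a c) (unit3 a c c) = (interval3 a c :: ('a, 'r::comm_ring_1) fun3)"
  unfolding commutator3_def mult3_unit3_left
  using assms by (intro ext) (auto simp: unit3_def interval3_def)

lemma commutator3_unit3_unit3:
  fixes a b c :: "'a::{order,finite}"
  assumes "a < b" "b < c"
  shows "commutator3 (unit3 a b b) (unit3 b b c) = (unit3 a b c :: ('a, 'r::comm_ring_1) fun3)"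
  unfolding commutator3_def mult3_unit3_left
  using assms by (intro ext) (auto simp: unit3_def)

lemma commutator3_interval3_interval3:
  fixes a b c :: "'a::{order,finite}"
  assumes "a < b" "b < c"
  shows "commutator3 (interval3 a b) (interval3 b c) = (unit3 a b c :: ('a, 'r::comm_ring_1) fun3)"
proof -
  have "\<not> b \<le> a" "a \<le> b" "b \<le> c" using assms by auto
  then show ?thesis
    unfolding commutator3_def mult3_interval3_interval3
    by (intro ext) (auto simp: unit3_def intro: order.antisym)
qed

lemma commutator3_interval3_unit3:
  fixes a d c :: "'a::{order,finite}"
  assumes "covered_by a d" "d < c"
  shows "commutator3 (interval3 a d) (unit3 a d c) =
    (\<lambda>x y z. unit3 a a c x y z + (unit3 a d c :: ('a, 'r::comm_ring_1) fun3) x y z)"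
proof (intro ext)
  fix x1 x2 x3
  have "a \<noteq> d" "a \<le> d" "d \<le> c" using assms by (auto simp: covered_by_def)
  then show "commutator3 (interval3 a d) (unit3 a d c) x1 x2 x3 =
    unit3 a a c x1 x2 x3 + (unit3 a d c :: ('a, 'r) fun3) x1 x2 x3"
    unfolding commutator3_def mult3_unit3_left mult3_unit3_right
    by (cases "x1 = a \<and> x3 = c")
      (auto simp: unit3_def interval3_def covered_by_between_iff[OF assms(1)])
qed

lemma commutator3_unit3_interval3:
  fixes a d c :: "'a::{order,finite}"
  assumes "a < d" "covered_by d c"
  shows "commutator3 (unit3 a d c) (interval3 d c) =
    (\<lambda>x y z. unit3 a c c x y z + (unit3 a d c :: ('a, 'r::comm_ring_1) fun3) x y z)"
proof (intro ext)
  fix x1 x2 x3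
  have "d \<noteq> c" "a \<le> d" "d \<le> c" using assms by (auto simp: covered_by_def)
  then show "commutator3 (unit3 a d c) (interval3 d c) x1 x2 x3 =
    unit3 a c c x1 x2 x3 + (unit3 a d c :: ('a, 'r) fun3) x1 x2 x3"
    unfolding commutator3_def mult3_unit3_left mult3_unit3_right
    by (cases "x1 = a \<and> x3 = c")
      (auto simp: unit3_def interval3_def covered_by_between_iff[OF assms(2)])
qed

lemma unit3_in_J3_1:
  fixes a b c :: "'a::{order,finite}"
  assumes "a \<le> b" "b \<le> c" "a < c"
  shows "(unit3 a b c :: ('a, 'r::comm_ring_1) fun3) \<in> J3 1"
  using assms one_le_len[OF assms(3)] unfolding J3_def I3_def unit3_def by auto

lemma commutator3_in_Z3_2: "u \<in> J3 1 \<Longrightarrow> v \<in> J3 1 \<Longrightarrow> commutator3 u v \<in> Z3_2"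
  unfolding Z3_2_def bracket3_def Z3_1_def by (rule rspan.base) blast

lemma commutator3_in_Z3_3: "u \<in> Z3_2 \<Longrightarrow> v \<in> Z3_2 \<Longrightarrow> commutator3 u v \<in> Z3_3"
  unfolding Z3_3_def bracket3_def by (rule rspan.base) blast

lemma Z3_3_diff:
  "f \<in> Z3_3 \<Longrightarrow> g \<in> Z3_3 \<Longrightarrow> (\<lambda>x y z. f x y z - g x y z) \<in> Z3_3"
  using rspan.add[OF _ rspan.smult[where r = "-1"]] unfolding Z3_3_def bracket3_def by simp

lemma interval3_in_Z3_2:
  fixes a c :: "'a::{order,finite}"
  assumes "a < c"
  shows "(interval3 a c :: ('a, 'r::comm_ring_1) fun3) \<in> Z3_2"
proof -
  have "commutator3 (unit3 a a c) (unit3 a c c) \<in> (Z3_2 :: ('a, 'r) fun3 set)"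
    using assms by (intro commutator3_in_Z3_2 unit3_in_J3_1) auto
  with assms show ?thesis by (simp add: commutator3_unit3_unit3_interval3)
qed

lemma unit3_in_Z3_2:
  fixes a b c :: "'a::{order,finite}"
  assumes "a < b" "b < c"
  shows "(unit3 a b c :: ('a, 'r::comm_ring_1) fun3) \<in> Z3_2"
proof -
  have "commutator3 (unit3 a b b) (unit3 b b c) \<in> (Z3_2 :: ('a, 'r) fun3 set)"
    using assms by (intro commutator3_in_Z3_2 unit3_in_J3_1) auto
  with assms show ?thesis by (simp add: commutator3_unit3_unit3)
qed

lemma unit3_in_Z3_3_strict:
  fixes a b c :: "'a::{order,finite}"
  assumes "a < b" "b < c"
  shows "(unit3 a b c :: ('a, 'r::comm_ring_1) fun3) \<in> Z3_3"
proof -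
  have "commutator3 (interval3 a b) (interval3 b c) \<in> (Z3_3 :: ('a, 'r) fun3 set)"
    using assms by (intro commutator3_in_Z3_3 interval3_in_Z3_2)
  with assms show ?thesis by (simp add: commutator3_interval3_interval3)
qed

lemma unit3_in_Z3_3:
  fixes a b c :: "'a::{order,finite}"
  assumes "a \<le> b" "b \<le> c" "a < m" "m < c"
  shows "(unit3 a b c :: ('a, 'r::comm_ring_1) fun3) \<in> Z3_3"
proof -
  consider "a < b \<and> b < c" | "b = a" | "b = c"
    using assms(1,2) by (auto simp: order.order_iff_strict)
  then show ?thesis
  proof cases
    case 1
    then show ?thesis by (auto intro: unit3_in_Z3_3_strict)
  next
    case 2
    obtain d where d: "covered_by a d" "d \<le> m" using exists_covered_by_above[OF assms(3)] .
    with assms have "d < c" by (auto dest: order.strict_trans1)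
    with d have "a < d" by (simp add: covered_by_def)
    have "(\<lambda>x y z. commutator3 (interval3 a d) (unit3 a d c) x y z - unit3 a d c x y z)
        \<in> (Z3_3 :: ('a, 'r) fun3 set)"
      using \<open>a < d\<close> \<open>d < c\<close>
      by (intro Z3_3_diff commutator3_in_Z3_3 interval3_in_Z3_2 unit3_in_Z3_2 unit3_in_Z3_3_strict)
    then show ?thesis by (simp add: commutator3_interval3_unit3[OF d(1) \<open>d < c\<close>] 2)
  next
    case 3
    obtain d where d: "m \<le> d" "covered_by d c" using exists_covered_by_below[OF assms(4)] .
    with assms have "a < d" by (auto dest: order.strict_trans2)
    with d have "d < c" by (simp add: covered_by_def)
    have "(\<lambda>x y z. commutator3 (unit3 a d c) (interval3 d c) x y z - unit3 a d c x y z)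
        \<in> (Z3_3 :: ('a, 'r) fun3 set)"
      using \<open>a < d\<close> \<open>d < c\<close>
      by (intro Z3_3_diff commutator3_in_Z3_3 interval3_in_Z3_2 unit3_in_Z3_2 unit3_in_Z3_3_strict)
    then show ?thesis by (simp add: commutator3_unit3_interval3[OF \<open>a < d\<close> d(2)] 3)
  qed
qed

lemma sum_unit3_expansion:
  fixes f :: "('a::{order,finite}, 'r::comm_ring_1) fun3"
  shows "(\<lambda>x y z. \<Sum>(a, b, c)\<in>UNIV. f a b c * unit3 a b c x y z) = f"
proof (intro ext)
  fix x y z
  have "(\<Sum>(a, b, c)\<in>UNIV. f a b c * unit3 a b c x y z)
      = (\<Sum>t\<in>UNIV. if t = (x, y, z) then f x y z else 0)"
    by (rule sum.cong) (auto simp: unit3_def split: if_splits)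
  also have "\<dots> = f x y z" by simp
  finally show "(\<Sum>(a, b, c)\<in>UNIV. f a b c * unit3 a b c x y z) = f x y z" .
qed

lemma J3_2_subset_Z3_3: "(J3 2 :: ('a::{order,finite}, 'r::comm_ring_1) fun3 set) \<subseteq> Z3_3"
proof
  fix f :: "('a, 'r) fun3"
  assume "f \<in> J3 2"
  then have f: "f \<in> I3" "\<And>a b c. f a b c \<noteq> 0 \<Longrightarrow> \<exists>m. a < m \<and> m < c"
    unfolding J3_2_eq by auto
  define g where "g = (\<lambda>(a, b, c). \<lambda>x y z. f a b c * unit3 a b c x y z :: 'r)"
  have "g (a, b, c) \<in> Z3_3" for a b c
  proof (cases "f a b c = 0")
    case True
    then show ?thesis using rspan.zero unfolding g_def Z3_3_def bracket3_def by simp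
  next
    case False
    with f(1) have "a \<le> b" "b \<le> c" by (auto simp: I3_def)
    with f(2)[OF False] have "unit3 a b c \<in> (Z3_3 :: ('a, 'r) fun3 set)"
      by (auto intro: unit3_in_Z3_3)
    then show ?thesis using rspan.smult unfolding g_def Z3_3_def bracket3_def by simp
  qed
  then have "(\<lambda>x y z. \<Sum>t\<in>UNIV. g t x y z) \<in> Z3_3"
    unfolding Z3_3_def bracket3_def by (intro rspan_sum) auto
  also have "(\<lambda>x y z. \<Sum>t\<in>UNIV. g t x y z) = f"
    using sum_unit3_expansion[of f] unfolding g_def case_prod_unfold by simp
  finally show "f \<in> Z3_3" .
qed

theorem lemma2p6:
  shows "(Z3_3 :: ('a::{order,finite}, 'r::comm_ring_1) fun3 set) = J3 2 \<and> ideal3 (Z3_3 :: ('a, 'r) fun3 set)"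
proof -
  have Z3_3_eq: "(Z3_3 :: ('a, 'r) fun3 set) = J3 2"
    using Z3_3_subset_J3_2 J3_2_subset_Z3_3 by (rule subset_antisym)
  show ?thesis using ideal3_J3[of 2] by (simp add: Z3_3_eq)
qed

end
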